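(* Let $1<n\leq m$ and let $v\in Z_{n,m}$ with $h(v)<h_{n,m}$. Then $d(v,0)\leq d(u^{(0)},0)\leq D_{n,m}$.
   Context: Elements of $\mathbb{Z}_n$ are identified with representatives in $\{0,\dots,n-1\}$ (so $v_0,v_{m+1}$ are such integers in sums). $Z_{n,m}$ has vertices $u=(u_0,\dots,u_{m+1})\in\mathbb{Z}_n\times\{-1,0,1\}^m\times\mathbb{Z}_n$ with $\sum u_i\equiv0\pmod n$; $u,v$ adjacent if there is $0\leq i\leq m$ with $u_j=v_j$ for $j\notin\{i,i+1\}$ and either ($u_i=v_i+1$, $u_{i+1}=v_{i+1}-1$) or ($u_i=v_i-1$, $u_{i+1}=v_{i+1}+1$), arithmetic in coordinates $0,m+1$ in $\mathbb{Z}_n$. $d$ is graph distance, $0$ the all-zero vertex. $\operatorname{Piv}(v)$ is the set of integers $-1\le p\le m+1$ with $n\mid\sum_{i=0}^pv_i$ (empty sum $0$). $h(v)=\min\{|p-\frac m2|:p\in\operatorname{Piv}(v)\}$. $h_{n,m}=\frac n2$ if $2\mid(m-n)$ and $\frac{n+1}{2}$ otherwise. $u^{(0)}$ is the vertex with $u_i=1$ ($1\le i\le m$), $u_0\equiv-\lfloor\frac{m-n}2\rfloor\pmod n$; for $n<m$, $m-n$ odd, $u^{(1)}$ is the vertex with $u_{\lceil(m+1)/2\rceil}=0$, other $u_i=1$ ($1\le i\le m$), $u_0\equiv-\lfloor\frac{m-n}2\rfloor\pmod n$. $D_{n,m}=d(u^{(0)},0)$ if $2\mid(m-n)$ and $D_{n,m}=\max\{d(u^{(0)},0),d(u^{(1)},0)\}$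 otherwise. *)

theory Defs
  imports Complex_Main "HOL-Library.Extended_Nat"
begin

text \<open>Vertices of Z_{n,m}: functions u :: nat => int, coordinates 0..m+1,
  with u_0, u_{m+1} in {0..n-1} (representatives of Z_n), u_i in {-1,0,1}
  for 1 <= i <= m, u_i = 0 beyond m+1 (canonical), and the sum divisible by n.\<close>
definition Zvert :: "nat \<Rightarrow> nat \<Rightarrow> (nat \<Rightarrow> int) \<Rightarrow> bool" where
  "Zvert n m u \<longleftrightarrow>
     u 0 \<in> {0..<int n} \<and> u (m+1) \<in> {0..<int n} \<and>
     (\<forall>i\<in>{1..m}. u i \<in> {-1,0,1}) \<and> (\<forall>i>m+1. u i = 0) \<and>
     int n dvd (\<Sum>i\<le>m+1. u i)"

definition coord_eq :: "nat \<Rightarrow> nat \<Rightarrow> nat \<Rightarrow> int \<Rightarrow> int \<Rightarrow> bool" where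
  "coord_eq n m k a b \<longleftrightarrow> (if k = 0 \<or> k = m+1 then a mod int n = b mod int n else a = b)"

definition Zadj :: "nat \<Rightarrow> nat \<Rightarrow> (nat \<Rightarrow> int) \<Rightarrow> (nat \<Rightarrow> int) \<Rightarrow> bool" where
  "Zadj n m u v \<longleftrightarrow> Zvert n m u \<and> Zvert n m v \<and>
     (\<exists>i\<le>m. (\<forall>j. j \<noteq> i \<and> j \<noteq> i+1 \<longrightarrow> u j = v j) \<and>
        ((coord_eq n m i (u i) (v i + 1) \<and> coord_eq n m (i+1) (u (i+1)) (v (i+1) - 1)) \<or>
         (coord_eq n m i (u i) (v i - 1) \<and> coord_eq n m (i+1) (u (i+1)) (v (i+1) + 1))))"

definition Zdist :: "nat \<Rightarrow> nat \<Rightarrow> (nat \<Rightarrow> int) \<Rightarrow> (nat \<Rightarrow> int) \<Rightarrow> enat" where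
  "Zdist n m u v = (INF k \<in> {k. (Zadj n m ^^ k) u v}. enat k)"

definition Piv :: "nat \<Rightarrow> nat \<Rightarrow> (nat \<Rightarrow> int) \<Rightarrow> int set" where
  "Piv n m v = {p. -1 \<le> p \<and> p \<le> int m + 1 \<and> int n dvd (\<Sum>i\<in>{0..p}. v (nat i))}"

definition hval :: "nat \<Rightarrow> nat \<Rightarrow> (nat \<Rightarrow> int) \<Rightarrow> real" where
  "hval n m v = Min ((\<lambda>p. \<bar>real_of_int p - real m / 2\<bar>) ` Piv n m v)"

definition hnm :: "nat \<Rightarrow> nat \<Rightarrow> real" where
  "hnm n m = (if even (int m - int n) then real n / 2 else (real n + 1) / 2)"

text \<open>u^(0): u_i = 1 (1<=i<=m), u_0 = -floor((m-n)/2) mod n, u_{m+1} forced by the sum condition.\<close>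
definition u0vert :: "nat \<Rightarrow> nat \<Rightarrow> nat \<Rightarrow> int" where
  "u0vert n m i = (let a = (- \<lfloor>(real m - real n) / 2\<rfloor>) mod int n in
     if i = 0 then a
     else if i \<le> m then 1
     else if i = m + 1 then (- (a + int m)) mod int n
     else 0)"

definition u1vert :: "nat \<Rightarrow> nat \<Rightarrow> nat \<Rightarrow> int" where
  "u1vert n m i = (let a = (- \<lfloor>(real m - real n) / 2\<rfloor>) mod int n in
     if i = 0 then a
     else if i = nat \<lceil>(real m + 1) / 2\<rceil> then 0
     else if i \<le> m then 1
     else if i = m + 1 then (- (a + int m - 1)) mod int n
     else 0)"

definition Dnm :: "nat \<Rightarrow> nat \<Rightarrow> enat" where
  "Dnm n m = (if even (int m - int n) then Zdist n m (u0vert n m) (\<lambda>_. 0)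
              else max (Zdist n m (u0vert n m) (\<lambda>_. 0)) (Zdist n m (u1vert n m) (\<lambda>_. 0)))"

end

theory Submission
  imports Defs
begin

text \<open>Write \<open>S\<^sub>q(v) = v\<^sub>0 + \<dots> + v\<^sub>q\<close> for the prefix sums of a vertex. The distance
  from \<open>v\<close> to \<open>0\<close> is \<open>min\<^sub>k \<Sum>\<^sub>q\<^sub>\<le>\<^sub>m \<bar>S\<^sub>q(v) - k n\<bar>\<close>: an edge changes a single
  prefix sum \<open>S\<^sub>q\<close> (\<open>q \<le> m\<close>) by \<open>\<plusminus>1\<close>, up to a common shift of all of them by a multiple
  of \<open>n\<close>, and conversely moving the prefix sum of largest deviation towards \<open>k n\<close> is
  always an edge. If \<open>p\<close> is a pivot of \<open>v\<close>, then \<open>S\<^sub>p(v) \<equiv> 0 (mod n)\<close> and the prefix sums are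
  1-Lipschitz, so \<open>d(v,0) \<le> \<Sum>\<^sub>q \<bar>q - p\<bar>\<close>. The prefix sums of \<open>u\<^sup>(\<^sup>0\<^sup>)\<close> are \<open>q - x\<close>
  with \<open>x \<equiv> \<lfloor>(m-n)/2\<rfloor> (mod n)\<close>, so \<open>d(u\<^sup>(\<^sup>0\<^sup>),0) = \<Sum>\<^sub>q \<bar>q - x\<bar>\<close> for the best such \<open>x\<close>;
  the hypothesis \<open>h(v) < h\<^sub>n\<^sub>,\<^sub>m\<close> implies that \<open>p\<close> is closer to \<open>m/2\<close> than
  every such \<open>x\<close>, and \<open>\<Sum>\<^sub>q \<bar>q - x\<bar>\<close> increases with \<open>\<bar>x - m/2\<bar>\<close>.\<close>

definition prefix_sum :: "(nat \<Rightarrow> int) \<Rightarrow> nat \<Rightarrow> int" where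
  "prefix_sum v q = (\<Sum>i\<le>q. v i)"

definition prefix_defect :: "nat \<Rightarrow> nat \<Rightarrow> (nat \<Rightarrow> int) \<Rightarrow> int \<Rightarrow> int" where
  "prefix_defect n m v k = (\<Sum>q\<le>m. \<bar>prefix_sum v q - k * int n\<bar>)"

definition abs_dev_sum :: "nat \<Rightarrow> int \<Rightarrow> int" where
  "abs_dev_sum m x = (\<Sum>q\<le>m. \<bar>int q - x\<bar>)"

lemma prefix_sum_0 [simp]: "prefix_sum v 0 = v 0"
  by (simp add: prefix_sum_def)

lemma prefix_sum_Suc [simp]: "prefix_sum v (Suc q) = prefix_sum v q + v (Suc q)"
  by (simp add: prefix_sum_def)

lemma prefix_sum_two_point:
  assumes "\<And>x. u x = v x + (if x = i then a else 0) + (if x = Suc i then b else 0)"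
  shows "prefix_sum u q = prefix_sum v q + (if i \<le> q then a else 0) + (if Suc i \<le> q then b else 0)"
proof -
  have "prefix_sum u q = (\<Sum>x\<le>q. v x) + (\<Sum>x\<le>q. if x = i then a else 0)
      + (\<Sum>x\<le>q. if x = Suc i then b else 0)"
    unfolding prefix_sum_def using assms by (simp add: sum.distrib)
  then show ?thesis by (simp add: prefix_sum_def sum.delta)
qed

lemma prefix_sum_diff_le:
  assumes "Zvert n m v" and "p \<le> q" and "q \<le> m"
  shows "\<bar>prefix_sum v q - prefix_sum v p\<bar> \<le> int q - int p"
  using assms(2,3)
proof (induction q)
  case (Suc q)
  show ?case
  proof (cases "p = Suc q")
    case False
    with Suc.prems have "\<bar>prefix_sum v q - prefix_sum v p\<bar> \<le> int q - int p"
      using Suc.IH by simp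
    moreover have "v (Suc q) \<in> {-1,0,1}"
      using assms(1) Suc.prems by (simp add: Zvert_def)
    ultimately show ?thesis by auto
  qed simp
qed simp

lemma abs_prefix_sum_diff_le:
  assumes "Zvert n m v" and "p \<le> m" and "q \<le> m"
  shows "\<bar>prefix_sum v q - prefix_sum v p\<bar> \<le> \<bar>int q - int p\<bar>"
  using prefix_sum_diff_le[OF assms(1) _ assms(3), of p] prefix_sum_diff_le[OF assms(1) _ assms(2), of q]
  by (cases "p \<le> q") (auto simp: abs_minus_commute)

lemma mod_eq_add_mult: "\<exists>j. (x::int) mod int n = x + j * int n"
  by (intro exI[of _ "- (x div int n)"]) (simp add: minus_div_mult_eq_mod[symmetric])

lemma prefix_defect_shift:
  assumes "\<forall>q\<le>m. prefix_sum u q = prefix_sum v q + (if q = i then e else 0) + j * int n"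
  shows "prefix_defect n m u (k + j)
       = (\<Sum>q\<le>m. \<bar>prefix_sum v q - k * int n + (if q = i then e else 0)\<bar>)"
  unfolding prefix_defect_def by (rule sum.cong) (auto simp: assms algebra_simps)

lemma Zadj_prefix_sum:
  assumes adj: "Zadj n m u v" and "0 < m"
  obtains i j e where "\<bar>e\<bar> \<le> 1"
    and "\<forall>q\<le>m. prefix_sum u q = prefix_sum v q + (if q = i then e else 0) + j * int n"
proof -
  obtain i where im: "i \<le> m" and eqo: "\<forall>j. j \<noteq> i \<and> j \<noteq> i+1 \<longrightarrow> u j = v j"
    and dis: "(coord_eq n m i (u i) (v i + 1) \<and> coord_eq n m (i+1) (u (i+1)) (v (i+1) - 1)) \<or>
         (coord_eq n m i (u i) (v i - 1) \<and> coord_eq n m (i+1) (u (i+1)) (v (i+1) + 1))"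
    using adj unfolding Zadj_def by blast
  obtain s :: int where s: "s = 1 \<or> s = -1" and c1: "coord_eq n m i (u i) (v i + s)"
    and c2: "coord_eq n m (i+1) (u (i+1)) (v (i+1) - s)"
    using dis by (metis diff_minus_eq_add uminus_add_conv_diff add_uminus_conv_diff)
  define a where "a = u i - v i"
  define b where "b = u (Suc i) - v (Suc i)"
  have sp: "\<And>q. prefix_sum u q = prefix_sum v q + (if i \<le> q then a else 0) + (if Suc i \<le> q then b else 0)"
    by (rule prefix_sum_two_point) (use eqo a_def b_def in auto)
  show ?thesis
  proof (cases "i = 0")
    case True
    have "int n dvd u 0 - (v 0 + s)"
      using c1 True by (simp add: coord_eq_def mod_eq_dvd_iff)
    then obtain j where j: "a = s + j * int n"
      using True by (auto simp: a_def dvd_def algebra_simps)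
    have "b = - s" using c2 True \<open>0 < m\<close> b_def by (simp add: coord_eq_def)
    then show ?thesis
      using that[of s i j] sp True j s by auto
  next
    case False
    have "a = s" using c1 False im a_def by (simp add: coord_eq_def)
    moreover have "Suc i \<le> m \<Longrightarrow> b = - s" using c2 b_def by (simp add: coord_eq_def)
    ultimately show ?thesis
      using that[of s i 0] sp s by auto
  qed
qed

lemma Zadj_prefix_defect_le:
  assumes "Zadj n m u v" and "0 < m"
  obtains k' where "prefix_defect n m u k' \<le> prefix_defect n m v k + 1"
proof -
  obtain i j e where e: "\<bar>e\<bar> \<le> 1"
    and h: "\<forall>q\<le>m. prefix_sum u q = prefix_sum v q + (if q = i then e else 0) + j * int n"
    using Zadj_prefix_sum[OF assms] .
  have "prefix_defect n m u (k + j)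
      = (\<Sum>q\<le>m. \<bar>prefix_sum v q - k * int n + (if q = i then e else 0)\<bar>)"
    by (rule prefix_defect_shift[OF h])
  also have "\<dots> \<le> (\<Sum>q\<le>m. \<bar>prefix_sum v q - k * int n\<bar> + (if q = i then \<bar>e\<bar> else 0))"
    by (rule sum_mono) auto
  also have "\<dots> = prefix_defect n m v k + (\<Sum>q\<le>m. if q = i then \<bar>e\<bar> else 0)"
    by (simp add: prefix_defect_def sum.distrib)
  also have "\<dots> \<le> prefix_defect n m v k + 1" using e by (simp add: sum.delta)
  finally show ?thesis by (rule that)
qed

lemma walk_length_ge_prefix_defect:
  assumes "(Zadj n m ^^ j) u (\<lambda>_. 0)" and "0 < m"
  obtains k where "prefix_defect n m u k \<le> int j"
  using assms(1)
proof (induction j arbitrary: u thesis)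
  case 0
  then have "prefix_defect n m u 0 = 0" by (simp add: prefix_defect_def prefix_sum_def)
  with 0(1)[of 0] show ?case by simp
next
  case (Suc j)
  from Suc.prems(2) obtain v where uv: "Zadj n m u v" and "(Zadj n m ^^ j) v (\<lambda>_. 0)"
    by (blast elim: relpowp_Suc_E2)
  with Suc.IH obtain k where "prefix_defect n m v k \<le> int j" by blast
  moreover obtain k' where "prefix_defect n m u k' \<le> prefix_defect n m v k + 1"
    using Zadj_prefix_defect_le[OF uv \<open>0 < m\<close>] .
  ultimately show ?case using Suc.prems(1)[of k'] by simp
qed

definition move_vertex :: "nat \<Rightarrow> nat \<Rightarrow> nat \<Rightarrow> int \<Rightarrow> (nat \<Rightarrow> int) \<Rightarrow> nat \<Rightarrow> int" where
  "move_vertex n m p s v = v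
     (p := if p = 0 then (v 0 - s) mod int n else v p - s,
      Suc p := if p = m then (v (m+1) + s) mod int n else v (Suc p) + s)"

lemma prefix_sum_move_vertex:
  assumes "p \<le> m"
  obtains j where
    "\<forall>q\<le>m. prefix_sum (move_vertex n m p s v) q = prefix_sum v q + (if q = p then -s else 0) + j * int n"
    and "int n dvd prefix_sum (move_vertex n m p s v) (m+1) - prefix_sum v (m+1)"
proof -
  define w where "w = move_vertex n m p s v"
  obtain j1 where j1: "(v 0 - s) mod int n = v 0 - s + j1 * int n" using mod_eq_add_mult by blast
  obtain j2 where j2: "(v (Suc m) + s) mod int n = v (Suc m) + (s + j2 * int n)"
    using mod_eq_add_mult[of "v (Suc m) + s" n] by (auto simp: add.assoc)
  define j where "j = (if p = 0 then j1 else 0)"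
  define b where "b = (if p = m then s + j2 * int n else s)"
  have sp: "\<And>q. prefix_sum w q
      = prefix_sum v q + (if p \<le> q then -s + j * int n else 0) + (if Suc p \<le> q then b else 0)"
    by (rule prefix_sum_two_point) (use j1 j2 in \<open>auto simp: w_def move_vertex_def j_def b_def\<close>)
  have "\<forall>q\<le>m. prefix_sum w q = prefix_sum v q + (if q = p then -s else 0) + j * int n"
    using sp by (auto simp: b_def j_def)
  moreover have "prefix_sum w (m+1) - prefix_sum v (m+1) = (j + (if p = m then j2 else 0)) * int n"
    using sp[of "m+1"] assms by (auto simp: b_def algebra_simps simp del: prefix_sum_Suc split: if_splits)
  ultimately show ?thesis using that unfolding w_def by (metis dvd_triv_right)
qed

lemma Zvert_move_vertex:
  assumes v: "Zvert n m v" and "p \<le> m"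
    and c1: "1 \<le> p \<Longrightarrow> v p - s \<in> {-1,0,1}"
    and c2: "Suc p \<le> m \<Longrightarrow> v (Suc p) + s \<in> {-1,0,1}"
  shows "Zvert n m (move_vertex n m p s v)"
proof -
  define w where "w = move_vertex n m p s v"
  have w: "w i = (if i = p then (if p = 0 then (v 0 - s) mod int n else v p - s)
      else if i = Suc p then (if p = m then (v (m+1) + s) mod int n else v (Suc p) + s) else v i)" for i
    by (simp add: w_def move_vertex_def)
  have n: "0 < int n" using v by (auto simp: Zvert_def)
  have "w 0 \<in> {0..<int n}"
    using v n by (cases "p = 0") (simp_all add: w Zvert_def)
  moreover have "w (m+1) \<in> {0..<int n}"
    using v n \<open>p \<le> m\<close> by (cases "p = m") (simp_all add: w Zvert_def)
  moreover have "w i \<in> {-1,0,1}" if "i \<in> {1..m}" for i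
  proof -
    consider "i = p" | "i = Suc p" | "i \<noteq> p" "i \<noteq> Suc p" by blast
    then show ?thesis
      using that v c1 c2 by cases (simp_all add: w Zvert_def)
  qed
  moreover have "\<forall>i>m+1. w i = 0"
    using v \<open>p \<le> m\<close> by (simp add: w Zvert_def)
  moreover have "int n dvd prefix_sum w (m+1)"
  proof -
    have "int n dvd prefix_sum w (m+1) - prefix_sum v (m+1)"
      using prefix_sum_move_vertex[OF \<open>p \<le> m\<close>] unfolding w_def by blast
    moreover have "int n dvd prefix_sum v (m+1)" using v by (simp add: Zvert_def prefix_sum_def)
    ultimately show ?thesis using dvd_add by (metis diff_add_cancel)
  qed
  ultimately show ?thesis unfolding w_def[symmetric] Zvert_def prefix_sum_def by blast
qed

lemma Zadj_move_vertex:
  assumes v: "Zvert n m v" and "p \<le> m" and s: "s = 1 \<or> s = -1"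
    and c1: "1 \<le> p \<Longrightarrow> v p - s \<in> {-1,0,1}"
    and c2: "Suc p \<le> m \<Longrightarrow> v (Suc p) + s \<in> {-1,0,1}"
  shows "Zadj n m v (move_vertex n m p s v)"
proof -
  define w where "w = move_vertex n m p s v"
  have "coord_eq n m p (v p) (w p + s)"
    using \<open>p \<le> m\<close> by (auto simp: coord_eq_def w_def move_vertex_def mod_add_left_eq)
  moreover have "coord_eq n m (p+1) (v (p+1)) (w (p+1) - s)"
    by (auto simp: coord_eq_def w_def move_vertex_def mod_diff_left_eq)
  moreover have "\<forall>j. j \<noteq> p \<and> j \<noteq> p + 1 \<longrightarrow> v j = w j"
    by (simp add: w_def move_vertex_def)
  ultimately show ?thesis
    using Zvert_move_vertex[OF assms(1,2) c1 c2] v s \<open>p \<le> m\<close>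
    unfolding Zadj_def w_def by auto
qed

lemma prefix_defect_eq_0_imp_zero:
  assumes v: "Zvert n m v" and "prefix_defect n m v k = 0"
  shows "v = (\<lambda>_. 0)"
proof -
  have S: "prefix_sum v q = k * int n" if "q \<le> m" for q
    using assms(2) that by (simp add: prefix_defect_def sum_nonneg_eq_0_iff)
  have "0 \<le> k * int n" "k * int n < 1 * int n"
    using S[of 0] v by (auto simp: Zvert_def)
  then have "k = 0"
    using mult_right_less_imp_less[of k "int n" 1] by (auto simp: zero_le_mult_iff)
  then have S0: "prefix_sum v q = 0" if "q \<le> m" for q
    using S that by simp
  have mid: "v i = 0" if "i \<le> m" for i
  proof (cases i)
    case (Suc q) then show ?thesis using S0[of q] S0[of i] that by simp
  qed (use S0[of 0] in simp)
  have "int n dvd v (m+1)"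
    using v S0[of m] by (simp add: Zvert_def prefix_sum_def)
  moreover have "0 \<le> v (m+1)" "v (m+1) < int n" using v by (auto simp: Zvert_def)
  ultimately have last: "v (m+1) = 0" using zdvd_not_zless by force
  show ?thesis
  proof
    fix i show "v i = 0"
      using mid last v by (cases "i \<le> m \<or> i = m + 1") (auto simp: Zvert_def)
  qed
qed

text \<open>Steepest descent: lowering the prefix sum of maximal deviation by one is an edge.\<close>

lemma prefix_defect_descent:
  assumes v: "Zvert n m v" and "0 < prefix_defect n m v k"
  obtains w k' where "Zadj n m v w" and "prefix_defect n m w k' = prefix_defect n m v k - 1"
proof -
  define T where "T q = prefix_sum v q - k * int n" for q
  have T_Suc: "v (Suc q) = T (Suc q) - T q" for q by (simp add: T_def)
  obtain p where pm: "p \<le> m" and pmax: "\<And>q. q \<le> m \<Longrightarrow> \<bar>T q\<bar> \<le> \<bar>T p\<bar>"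
    using Max_in[of "(\<lambda>q. \<bar>T q\<bar>) ` {..m}"] Max_ge[of "(\<lambda>q. \<bar>T q\<bar>) ` {..m}"] by fastforce
  have "T p \<noteq> 0"
  proof
    assume "T p = 0"
    then have "prefix_defect n m v k = 0"
      using pmax by (simp add: prefix_defect_def T_def[symmetric])
    with assms(2) show False by simp
  qed
  define s :: int where "s = sgn (T p)"
  have s: "s = 1 \<or> s = -1" using \<open>T p \<noteq> 0\<close> by (simp add: s_def sgn_if)
  have c1: "v p - s \<in> {-1,0,1}" if p1: "1 \<le> p"
  proof -
    obtain q where q: "p = Suc q" using p1 by (cases p) auto
    have "v p \<in> {-1,0,1}" using v p1 pm by (simp add: Zvert_def)
    then show ?thesis
      using T_Suc[of q] pmax[of q] q pm \<open>T p \<noteq> 0\<close> by (auto simp: s_def sgn_if)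
  qed
  have c2: "v (Suc p) + s \<in> {-1,0,1}" if "Suc p \<le> m"
  proof -
    have "v (Suc p) \<in> {-1,0,1}" using v that by (simp add: Zvert_def)
    then show ?thesis
      using T_Suc[of p] pmax[of "Suc p"] that \<open>T p \<noteq> 0\<close> by (auto simp: s_def sgn_if)
  qed
  define w where "w = move_vertex n m p s v"
  obtain j where wS: "\<forall>q\<le>m. prefix_sum w q = prefix_sum v q + (if q = p then -s else 0) + j * int n"
    using prefix_sum_move_vertex[OF pm] unfolding w_def by blast
  have "prefix_defect n m w (k + j) = (\<Sum>q\<le>m. \<bar>T q + (if q = p then -s else 0)\<bar>)"
    unfolding T_def by (rule prefix_defect_shift[OF wS])
  also have "\<dots> = (\<Sum>q\<le>m. \<bar>T q\<bar> + (if q = p then \<bar>T p - s\<bar> - \<bar>T p\<bar> else 0))"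
    by (rule sum.cong) auto
  also have "\<dots> = prefix_defect n m v k + (\<bar>T p - s\<bar> - \<bar>T p\<bar>)"
    using pm by (simp add: sum.distrib prefix_defect_def T_def)
  also have "\<dots> = prefix_defect n m v k - 1"
    using \<open>T p \<noteq> 0\<close> by (auto simp: s_def sgn_if)
  finally show ?thesis
    using that Zadj_move_vertex[OF v pm s c1 c2] unfolding w_def by blast
qed

lemma walk_to_zero_within_prefix_defect:
  assumes "Zvert n m v"
  obtains j where "int j \<le> prefix_defect n m v k" and "(Zadj n m ^^ j) v (\<lambda>_. 0)"
  using assms
proof (induction "nat (prefix_defect n m v k)" arbitrary: v k thesis rule: less_induct)
  case less
  show ?case
  proof (cases "prefix_defect n m v k = 0")
    case True
    then show ?thesis
      using less.prems(1)[of 0] prefix_defect_eq_0_imp_zero[OF less.prems(2)] by simp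
  next
    case False
    have "0 \<le> prefix_defect n m v k" by (simp add: prefix_defect_def sum_nonneg)
    with False have pos: "0 < prefix_defect n m v k" by simp
    obtain w k' where vw: "Zadj n m v w"
      and dw: "prefix_defect n m w k' = prefix_defect n m v k - 1"
      using prefix_defect_descent[OF less.prems(2) pos] by blast
    have w: "Zvert n m w" using vw by (simp add: Zadj_def)
    have "nat (prefix_defect n m w k') < nat (prefix_defect n m v k)" using dw pos by simp
    then obtain j where "int j \<le> prefix_defect n m w k'" and "(Zadj n m ^^ j) w (\<lambda>_. 0)"
      using less.hyps w by blast
    with vw dw show ?thesis
      using less.prems(1)[of "Suc j"] relpowp_Suc_I2[of "Zadj n m" v w j] by simp
  qed
qed

lemma Zdist_le_prefix_defect:
  assumes "Zvert n m v"
  shows "Zdist n m v (\<lambda>_. 0) \<le> enat (nat (prefix_defect n m v k))"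
proof -
  obtain j where "int j \<le> prefix_defect n m v k" and "(Zadj n m ^^ j) v (\<lambda>_. 0)"
    using walk_to_zero_within_prefix_defect[OF assms] .
  then have "Zdist n m v (\<lambda>_. 0) \<le> enat j" unfolding Zdist_def by (intro INF_lower) simp
  also have "\<dots> \<le> enat (nat (prefix_defect n m v k))" using \<open>int j \<le> _\<close> by simp
  finally show ?thesis .
qed

lemma prefix_defect_le_Zdist:
  assumes "0 < m" and "\<And>k. L \<le> prefix_defect n m v k"
  shows "enat (nat L) \<le> Zdist n m v (\<lambda>_. 0)"
  unfolding Zdist_def
proof (rule INF_greatest)
  fix j assume "j \<in> {j. (Zadj n m ^^ j) v (\<lambda>_. 0)}"
  then obtain k where "prefix_defect n m v k \<le> int j"
    using walk_length_ge_prefix_defect \<open>0 < m\<close> by blast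
  then show "enat (nat L) \<le> enat j" using assms(2)[of k] by simp
qed

lemma abs_dev_sum_symmetric:
  "2 * abs_dev_sum m x = (\<Sum>q\<le>m. max \<bar>2 * int q - int m\<bar> \<bar>2 * x - int m\<bar>)"
proof -
  have "abs_dev_sum m x = (\<Sum>q\<le>m. \<bar>int (m - q) - x\<bar>)"
    unfolding abs_dev_sum_def
    by (rule sum.reindex_bij_witness[of _ "\<lambda>q. m - q" "\<lambda>q. m - q"]) auto
  then have "2 * abs_dev_sum m x = (\<Sum>q\<le>m. \<bar>int q - x\<bar> + \<bar>int (m - q) - x\<bar>)"
    by (simp add: sum.distrib abs_dev_sum_def)
  also have "\<dots> = (\<Sum>q\<le>m. max \<bar>2 * int q - int m\<bar> \<bar>2 * x - int m\<bar>)"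
    by (rule sum.cong) (auto simp: of_nat_diff)
  finally show ?thesis .
qed

lemma abs_dev_sum_mono:
  assumes "\<bar>2 * x - int m\<bar> \<le> \<bar>2 * y - int m\<bar>"
  shows "abs_dev_sum m x \<le> abs_dev_sum m y"
proof -
  have "2 * abs_dev_sum m x \<le> 2 * abs_dev_sum m y"
    unfolding abs_dev_sum_symmetric by (rule sum_mono) (use assms in auto)
  then show ?thesis by simp
qed

lemma floor_half_diff: "\<lfloor>(real m - real n) / 2\<rfloor> = (int m - int n) div 2"
  using floor_divide_of_int_eq[of "int m - int n" 2] by simp

lemma prefix_sum_u0vert:
  "q \<le> m \<Longrightarrow> prefix_sum (u0vert n m) q = (- \<lfloor>(real m - real n) / 2\<rfloor>) mod int n + int q"
  by (induction q) (simp_all add: u0vert_def Let_def)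

lemma prefix_defect_u0vert:
  obtains r where
    "prefix_defect n m (u0vert n m) k = abs_dev_sum m (\<lfloor>(real m - real n) / 2\<rfloor> + r * int n)"
proof -
  define c where "c = \<lfloor>(real m - real n) / 2\<rfloor>"
  obtain t where t: "(- c) mod int n = - c + t * int n" using mod_eq_add_mult by blast
  have "prefix_defect n m (u0vert n m) k = abs_dev_sum m (c + (k - t) * int n)"
    unfolding prefix_defect_def abs_dev_sum_def
    by (rule sum.cong) (auto simp: prefix_sum_u0vert c_def[symmetric] t algebra_simps)
  then show ?thesis using that unfolding c_def by blast
qed

text \<open>The hypothesis \<open>h(v) < h\<^sub>n\<^sub>,\<^sub>m\<close> places the pivot strictly closer to \<open>m/2\<close> than every
  \<open>x \<equiv> \<lfloor>(m-n)/2\<rfloor> (mod n)\<close>: these satisfy \<open>2x - m \<equiv> -n\<close> resp. \<open>-n-1 (mod 2n)\<close> as \<open>m - n\<close> is even resp. odd.\<close>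

lemma pivot_closer_than_u0vert_offsets:
  fixes p r :: int
  assumes "real_of_int \<bar>2 * p - int m\<bar> < 2 * hnm n m"
  shows "\<bar>2 * p - int m\<bar> \<le> \<bar>2 * (\<lfloor>(real m - real n) / 2\<rfloor> + r * int n) - int m\<bar>"
proof (cases "even (int m - int n)")
  case True
  then have "2 * hnm n m = real n" by (simp add: hnm_def)
  then have "\<bar>2 * p - int m\<bar> < int n" using assms by linarith
  moreover have "2 * (\<lfloor>(real m - real n) / 2\<rfloor> + r * int n) - int m = int n * (2 * r - 1)"
  proof -
    have "2 * ((int m - int n) div 2) = int m - int n" using True by presburger
    then show ?thesis by (simp add: floor_half_diff algebra_simps)
  qed
  moreover have "int n * 1 \<le> int n * \<bar>2 * r - 1\<bar>"
    by (intro mult_left_mono) presburger+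
  ultimately show ?thesis by (simp add: abs_mult)
next
  case False
  then have "2 * hnm n m = real n + 1" by (simp add: hnm_def)
  then have "\<bar>2 * p - int m\<bar> < int n + 1" using assms by linarith
  moreover have "\<bar>2 * p - int m\<bar> \<noteq> int n" using False by presburger
  moreover have "2 * (\<lfloor>(real m - real n) / 2\<rfloor> + r * int n) - int m = int n * (2 * r - 1) - 1"
  proof -
    have "2 * ((int m - int n) div 2) = int m - int n - 1" using False by presburger
    then show ?thesis by (simp add: floor_half_diff algebra_simps)
  qed
  moreover have "int n \<le> int n * (2 * r - 1) \<or> int n * (2 * r - 1) \<le> - int n"
  proof (cases "r \<ge> 1")
    case True
    then have "int n * 1 \<le> int n * (2 * r - 1)" by (intro mult_left_mono) auto
    then show ?thesis by simp
  next
    case False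
    then have "int n * (2 * r - 1) \<le> int n * (-1)" by (intro mult_left_mono) auto
    then show ?thesis by simp
  qed
  ultimately show ?thesis by linarith
qed

lemma pivot_of_hval_less_hnm:
  assumes "n \<le> m" and "hval n m v < hnm n m"
  obtains p where "p \<le> m" and "int n dvd prefix_sum v p"
    and "real_of_int \<bar>2 * int p - int m\<bar> < 2 * hnm n m"
proof -
  have "finite (Piv n m v)"
    by (rule finite_subset[of _ "{-1..int m + 1}"]) (auto simp: Piv_def)
  moreover have "-1 \<in> Piv n m v" by (simp add: Piv_def)
  ultimately have "hval n m v \<in> (\<lambda>p. \<bar>real_of_int p - real m / 2\<bar>) ` Piv n m v"
    unfolding hval_def by (intro Min_in) auto
  then obtain p where p: "p \<in> Piv n m v" and "hval n m v = \<bar>real_of_int p - real m / 2\<bar>"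
    by blast
  moreover have "real_of_int \<bar>2 * p - int m\<bar> = 2 * \<bar>real_of_int p - real m / 2\<bar>"
    by (simp add: abs_if)
  ultimately have hp: "real_of_int \<bar>2 * p - int m\<bar> < 2 * hnm n m"
    using assms(2) by linarith
  moreover have "2 * hnm n m \<le> real n + 1" by (simp add: hnm_def)
  ultimately have "\<bar>2 * p - int m\<bar> < int n + 1" by linarith
  then have "0 \<le> p" and "p \<le> int m" using assms(1) by linarith+
  have "{0..p} = int ` {0..nat p}" using \<open>0 \<le> p\<close> by (simp add: image_int_atLeastAtMost)
  then have "(\<Sum>i\<in>{0..p}. v (nat i)) = prefix_sum v (nat p)"
    by (simp add: sum.reindex prefix_sum_def atLeast0AtMost)
  then show ?thesis
    using that[of "nat p"] p hp \<open>0 \<le> p\<close> \<open>p \<le> int m\<close> by (simp add: Piv_def)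
qed

lemma Zdist_le_abs_dev_sum_pivot:
  assumes v: "Zvert n m v" and "p \<le> m" and "int n dvd prefix_sum v p"
  shows "Zdist n m v (\<lambda>_. 0) \<le> enat (nat (abs_dev_sum m (int p)))"
proof -
  obtain c where c: "prefix_sum v p = c * int n"
    using assms(3) by (auto simp: dvd_def mult.commute)
  have "prefix_defect n m v c \<le> abs_dev_sum m (int p)"
    unfolding prefix_defect_def abs_dev_sum_def
    by (rule sum_mono) (use abs_prefix_sum_diff_le[OF v \<open>p \<le> m\<close>] c in simp)
  then have "enat (nat (prefix_defect n m v c)) \<le> enat (nat (abs_dev_sum m (int p)))" by simp
  with Zdist_le_prefix_defect[OF v] show ?thesis by (rule order_trans)
qed

lemma abs_dev_sum_pivot_le_Zdist_u0vert:
  assumes "0 < m" and "real_of_int \<bar>2 * int p - int m\<bar> < 2 * hnm n m"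
  shows "enat (nat (abs_dev_sum m (int p))) \<le> Zdist n m (u0vert n m) (\<lambda>_. 0)"
proof (rule prefix_defect_le_Zdist[OF \<open>0 < m\<close>])
  fix k
  obtain r where "prefix_defect n m (u0vert n m) k
      = abs_dev_sum m (\<lfloor>(real m - real n) / 2\<rfloor> + r * int n)"
    using prefix_defect_u0vert .
  then show "abs_dev_sum m (int p) \<le> prefix_defect n m (u0vert n m) k"
    using abs_dev_sum_mono pivot_closer_than_u0vert_offsets[OF assms(2)] by simp
qed

theorem lemma5p24:
  fixes n m :: nat and v :: "nat \<Rightarrow> int"
  assumes "1 < n" and "n \<le> m"
    and "Zvert n m v"
    and "hval n m v < hnm n m"
  shows "Zdist n m v (\<lambda>_. 0) \<le> Zdist n m (u0vert n m) (\<lambda>_. 0)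
       \<and> Zdist n m (u0vert n m) (\<lambda>_. 0) \<le> Dnm n m"
proof
  obtain p where "p \<le> m" and "int n dvd prefix_sum v p"
    and hp: "real_of_int \<bar>2 * int p - int m\<bar> < 2 * hnm n m"
    using pivot_of_hval_less_hnm[OF assms(2,4)] .
  have "0 < m" using assms(1,2) by simp
  show "Zdist n m v (\<lambda>_. 0) \<le> Zdist n m (u0vert n m) (\<lambda>_. 0)"
    using Zdist_le_abs_dev_sum_pivot[OF assms(3) \<open>p \<le> m\<close> \<open>int n dvd _\<close>]
      abs_dev_sum_pivot_le_Zdist_u0vert[OF \<open>0 < m\<close> hp]
    by (rule order_trans)
next
  show "Zdist n m (u0vert n m) (\<lambda>_. 0) \<le> Dnm n m" by (simp add: Dnm_def)
qed

end
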